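(* Let $\mathcal{C}$ be an assembler satisfying (S), (Ep), (D) with sink $S$, and let $U$ be a noninitial object of $\mathcal{C}$. Let $\mathcal{C}_U$ be the full subcategory of $\mathcal{C}$ on those objects $A$ with $\mathrm{Hom}_{\mathcal{C}}(A,U)\neq\emptyset$. Let $\mathcal{F}=\{f_A:A\to S\}$ be a family of morphisms to the sink of $\mathcal{C}$ (with $f_S=1_S$) and let $\mathcal{F}'=\{f'_A:A\to U\}_{A\in\mathcal{C}_U}$ be a family of morphisms to $U$ in $\mathcal{C}_U$ (with $f'_U=1_U$) satisfying $f_A=f_Uf'_A$ for all $A$ in $\mathcal{C}_U$. Let $G$ and $G'$ be the groups associated to $\mathcal{C}$ (with sink $S$) and $\mathcal{C}_U$ (with sink $U$) respectively. Then there exists a group isomorphism $\varphi:G'\to G$ such that $\pi_{\mathcal{F}}\circ j=\varphi_*\circ\pi_{\mathcal{F}'}$ as functors $\mathcal{C}_U\to\mathcal{S}_G$, where $j:\mathcal{C}_U\to\mathcal{C}$ is the inclusion and $\varphi_*:\mathcal{S}_{G'}\to\mathcal{S}_G$ is induced by $\varphi$.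
   Context: An assembler is a small category with a Grothendieck topology satisfying: (I) there is an initial object $\varnothing$ covered by the empty family; (R) any two finite disjoint covering families of an object have a common refinement which is a finite disjoint covering family; (M) all morphisms are monomorphisms. Maps $A\to C$, $B\to C$ are disjoint if $A\times_CB$ exists and is initial. Conditions: (S) there is an object $S$ (the sink) with $\mathcal{C}(A,S)\neq\emptyset$ for all $A$; (Ep) all morphisms with noninitial domain are epimorphisms and every family $\{A\to B\}$ with $A\ne\varnothing$ is covering; (D) for $A,B\neq\varnothing$ no two morphisms $A\to C$, $B\to C$ are disjoint. For such an assembler with sink $S$, the group $G$ consists of classes $[S\xleftarrow{f_1}A\xrightarrow{f_2}S]$ with $A$ noninitial, modulo the equivalence relation generated by $[A;f_1,f_2]\sim[B;g_1,g_2]$ when there are $h:C\to A$, $k:C\to B$ with $f_1h=g_1k$, $f_2h=g_2k$; the product is $[A;f_1,f_2]\cdot[B;g_1,g_2]=[X;f_1g_1',g_2f_2']$ for any noninitial $X$ with $g_1':X\to A$, $f_2':X\to B$, $f_2g_1'=g_1f_2'$. $\mathcal{S}_G$ is the assembler with objects $\varnothing,*$, one morphism $\varnothing\to *$, $\mathrm{Aut}( * )=G$, and a homomorphism of groups induces a morphism between such assemblers. For a family $\mathcal{F}=\{f_A:A\to S\}$, $\pi_{\mathcal{F}}$ sends noninitial objects to $*$ and $g:A\to B$ to $[A;f_A,f_Bg]$. *)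

theory Defs
  imports "HOL-Algebra.Group"
begin

text \<open>A small category: a set of objects, a set of arrows, domain, codomain,
  composition (Cmp g f means g after f) and identities.\<close>

record ('o, 'm) cat =
  Obj :: "'o set"
  Arr :: "'m set"
  Dom :: "'m \<Rightarrow> 'o"
  Cod :: "'m \<Rightarrow> 'o"
  Cmp :: "'m \<Rightarrow> 'm \<Rightarrow> 'm"
  Id  :: "'o \<Rightarrow> 'm"

definition homs :: "('o,'m) cat \<Rightarrow> 'o \<Rightarrow> 'o \<Rightarrow> 'm set" where
  "homs C A B = {f \<in> Arr C. Dom C f = A \<and> Cod C f = B}"

definition category :: "('o,'m) cat \<Rightarrow> bool" where
  "category C \<longleftrightarrow>
     (\<forall>f\<in>Arr C. Dom C f \<in> Obj C \<and> Cod C f \<in> Obj C) \<and>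
     (\<forall>A\<in>Obj C. Id C A \<in> homs C A A) \<and>
     (\<forall>f\<in>Arr C. \<forall>g\<in>Arr C. Cod C f = Dom C g \<longrightarrow>
        Cmp C g f \<in> Arr C \<and> Dom C (Cmp C g f) = Dom C f \<and> Cod C (Cmp C g f) = Cod C g) \<and>
     (\<forall>f\<in>Arr C. \<forall>g\<in>Arr C. \<forall>h\<in>Arr C. Cod C f = Dom C g \<and> Cod C g = Dom C h \<longrightarrow>
        Cmp C h (Cmp C g f) = Cmp C (Cmp C h g) f) \<and>
     (\<forall>f\<in>Arr C. Cmp C f (Id C (Dom C f)) = f \<and> Cmp C (Id C (Cod C f)) f = f)"

definition initial :: "('o,'m) cat \<Rightarrow> 'o \<Rightarrow> bool" where
  "initial C A \<longleftrightarrow> A \<in> Obj C \<and> (\<forall>B\<in>Obj C. \<exists>!f. f \<in> homs C A B)"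

definition mono :: "('o,'m) cat \<Rightarrow> 'm \<Rightarrow> bool" where
  "mono C f \<longleftrightarrow> (\<forall>g\<in>Arr C. \<forall>h\<in>Arr C. Cod C g = Dom C f \<and> Cod C h = Dom C f \<and>
      Dom C g = Dom C h \<and> Cmp C f g = Cmp C f h \<longrightarrow> g = h)"

definition epi :: "('o,'m) cat \<Rightarrow> 'm \<Rightarrow> bool" where
  "epi C f \<longleftrightarrow> (\<forall>g\<in>Arr C. \<forall>h\<in>Arr C. Dom C g = Cod C f \<and> Dom C h = Cod C f \<and>
      Cod C g = Cod C h \<and> Cmp C g f = Cmp C h f \<longrightarrow> g = h)"

definition is_pullback :: "('o,'m) cat \<Rightarrow> 'm \<Rightarrow> 'm \<Rightarrow> 'o \<Rightarrow> 'm \<Rightarrow> 'm \<Rightarrow> bool" where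
  "is_pullback C f g P p1 p2 \<longleftrightarrow>
     P \<in> Obj C \<and> p1 \<in> homs C P (Dom C f) \<and> p2 \<in> homs C P (Dom C g) \<and>
     Cmp C f p1 = Cmp C g p2 \<and>
     (\<forall>X\<in>Obj C. \<forall>x1 x2. x1 \<in> homs C X (Dom C f) \<and> x2 \<in> homs C X (Dom C g) \<and>
        Cmp C f x1 = Cmp C g x2 \<longrightarrow>
        (\<exists>!u. u \<in> homs C X P \<and> Cmp C p1 u = x1 \<and> Cmp C p2 u = x2))"

definition disjoint_maps :: "('o,'m) cat \<Rightarrow> 'm \<Rightarrow> 'm \<Rightarrow> bool" where
  "disjoint_maps C f g \<longleftrightarrow> f \<in> Arr C \<and> g \<in> Arr C \<and> Cod C f = Cod C g \<and>
     (\<exists>P p1 p2. is_pullback C f g P p1 p2 \<and> initial C P)"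

definition sieve :: "('o,'m) cat \<Rightarrow> 'o \<Rightarrow> 'm set \<Rightarrow> bool" where
  "sieve C A R \<longleftrightarrow> R \<subseteq> {f \<in> Arr C. Cod C f = A} \<and>
     (\<forall>f\<in>R. \<forall>g\<in>Arr C. Cod C g = Dom C f \<longrightarrow> Cmp C f g \<in> R)"

definition pb_sieve :: "('o,'m) cat \<Rightarrow> 'm \<Rightarrow> 'm set \<Rightarrow> 'm set" where
  "pb_sieve C f R = {g \<in> Arr C. Cod C g = Dom C f \<and> Cmp C f g \<in> R}"

definition grothendieck_topology :: "('o,'m) cat \<Rightarrow> ('o \<Rightarrow> 'm set set) \<Rightarrow> bool" where
  "grothendieck_topology C Cov \<longleftrightarrow>
     (\<forall>A\<in>Obj C. \<forall>R\<in>Cov A. sieve C A R) \<and>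
     (\<forall>A\<in>Obj C. {f \<in> Arr C. Cod C f = A} \<in> Cov A) \<and>
     (\<forall>A\<in>Obj C. \<forall>R\<in>Cov A. \<forall>f\<in>Arr C. Cod C f = A \<longrightarrow> pb_sieve C f R \<in> Cov (Dom C f)) \<and>
     (\<forall>A\<in>Obj C. \<forall>R\<in>Cov A. \<forall>R'. sieve C A R' \<and> (\<forall>f\<in>R. pb_sieve C f R' \<in> Cov (Dom C f))
        \<longrightarrow> R' \<in> Cov A)"

definition gen_sieve :: "('o,'m) cat \<Rightarrow> 'm set \<Rightarrow> 'm set" where
  "gen_sieve C F = {Cmp C f g | f g. f \<in> F \<and> g \<in> Arr C \<and> Cod C g = Dom C f}"

definition covering :: "('o,'m) cat \<Rightarrow> ('o \<Rightarrow> 'm set set) \<Rightarrow> 'o \<Rightarrow> 'm set \<Rightarrow> bool" where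
  "covering C Cov A F \<longleftrightarrow> F \<subseteq> {f \<in> Arr C. Cod C f = A} \<and> gen_sieve C F \<in> Cov A"

definition fin_disj_cov :: "('o,'m) cat \<Rightarrow> ('o \<Rightarrow> 'm set set) \<Rightarrow> 'o \<Rightarrow> 'm set \<Rightarrow> bool" where
  "fin_disj_cov C Cov A F \<longleftrightarrow> finite F \<and> covering C Cov A F \<and>
     (\<forall>f\<in>F. \<forall>g\<in>F. f \<noteq> g \<longrightarrow> disjoint_maps C f g)"

definition refines :: "('o,'m) cat \<Rightarrow> 'm set \<Rightarrow> 'm set \<Rightarrow> bool" where
  "refines C F' F \<longleftrightarrow> (\<forall>g\<in>F'. \<exists>f\<in>F. \<exists>h\<in>Arr C. Cod C h = Dom C f \<and> g = Cmp C f h)"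

definition assembler :: "('o,'m) cat \<Rightarrow> ('o \<Rightarrow> 'm set set) \<Rightarrow> bool" where
  "assembler C Cov \<longleftrightarrow>
     category C \<and> grothendieck_topology C Cov \<and>
     \<comment> \<open>(I)\<close>
     (\<exists>E. initial C E \<and> covering C Cov E {}) \<and>
     \<comment> \<open>(R)\<close>
     (\<forall>A\<in>Obj C. \<forall>F1 F2. fin_disj_cov C Cov A F1 \<and> fin_disj_cov C Cov A F2 \<longrightarrow>
        (\<exists>F3. fin_disj_cov C Cov A F3 \<and> refines C F3 F1 \<and> refines C F3 F2)) \<and>
     \<comment> \<open>(M)\<close>
     (\<forall>f\<in>Arr C. mono C f)"

definition is_sink :: "('o,'m) cat \<Rightarrow> 'o \<Rightarrow> bool" where
  "is_sink C S \<longleftrightarrow> S \<in> Obj C \<and> (\<forall>A\<in>Obj C. homs C A S \<noteq> {})"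

definition cond_Ep :: "('o,'m) cat \<Rightarrow> ('o \<Rightarrow> 'm set set) \<Rightarrow> bool" where
  "cond_Ep C Cov \<longleftrightarrow>
     (\<forall>f\<in>Arr C. \<not> initial C (Dom C f) \<longrightarrow> epi C f) \<and>
     (\<forall>f\<in>Arr C. \<not> initial C (Dom C f) \<longrightarrow> covering C Cov (Cod C f) {f})"

definition cond_D :: "('o,'m) cat \<Rightarrow> bool" where
  "cond_D C \<longleftrightarrow> (\<forall>f\<in>Arr C. \<forall>g\<in>Arr C. \<not> initial C (Dom C f) \<and> \<not> initial C (Dom C g)
       \<and> Cod C f = Cod C g \<longrightarrow> \<not> disjoint_maps C f g)"

definition full_sub :: "('o,'m) cat \<Rightarrow> 'o \<Rightarrow> ('o,'m) cat" where
  "full_sub C U = C\<lparr>Obj := {A \<in> Obj C. homs C A U \<noteq> {}},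
                     Arr := {f \<in> Arr C. homs C (Dom C f) U \<noteq> {} \<and> homs C (Cod C f) U \<noteq> {}}\<rparr>"

text \<open>Spans S <- A -> S with A noninitial, represented by the pair of legs.\<close>
definition gT :: "('o,'m) cat \<Rightarrow> 'o \<Rightarrow> ('m \<times> 'm) set" where
  "gT C S = {(f1, f2). f1 \<in> Arr C \<and> f2 \<in> Arr C \<and> Dom C f1 = Dom C f2 \<and>
     Cod C f1 = S \<and> Cod C f2 = S \<and> \<not> initial C (Dom C f1)}"

definition gR :: "('o,'m) cat \<Rightarrow> 'o \<Rightarrow> (('m \<times> 'm) \<times> ('m \<times> 'm)) set" where
  "gR C S = {((f1, f2), (g1, g2)). (f1, f2) \<in> gT C S \<and> (g1, g2) \<in> gT C S \<and>
     (\<exists>h k. h \<in> Arr C \<and> k \<in> Arr C \<and> Dom C h = Dom C k \<and> \<not> initial C (Dom C h) \<and>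
        Cod C h = Dom C f1 \<and> Cod C k = Dom C g1 \<and>
        Cmp C f1 h = Cmp C g1 k \<and> Cmp C f2 h = Cmp C g2 k)}"

definition gE :: "('o,'m) cat \<Rightarrow> 'o \<Rightarrow> (('m \<times> 'm) \<times> ('m \<times> 'm)) set" where
  "gE C S = Restr ((gR C S \<union> (gR C S)\<inverse>)\<^sup>*) (gT C S)"

definition gclass :: "('o,'m) cat \<Rightarrow> 'o \<Rightarrow> 'm \<times> 'm \<Rightarrow> ('m \<times> 'm) set" where
  "gclass C S p = gE C S `` {p}"

definition gmult :: "('o,'m) cat \<Rightarrow> 'o \<Rightarrow> ('m \<times> 'm) set \<Rightarrow> ('m \<times> 'm) set \<Rightarrow> ('m \<times> 'm) set" where
  "gmult C S x y = (SOME z. \<exists>f1 f2 g1 g2 u v. (f1, f2) \<in> x \<and> (g1, g2) \<in> y \<and>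
      u \<in> Arr C \<and> v \<in> Arr C \<and> Dom C u = Dom C v \<and> \<not> initial C (Dom C u) \<and>
      Cod C u = Dom C f1 \<and> Cod C v = Dom C g1 \<and> Cmp C f2 u = Cmp C g1 v \<and>
      z = gclass C S (Cmp C f1 u, Cmp C g2 v))"

definition group_of :: "('o,'m) cat \<Rightarrow> 'o \<Rightarrow> ('m \<times> 'm) set monoid" where
  "group_of C S = \<lparr>carrier = gT C S // gE C S, mult = gmult C S,
                   one = gclass C S (Id C S, Id C S)\<rparr>"

datatype sg_obj = SG_empty | SG_star

text \<open>Morphisms of S_G: identity of the empty object, the unique map empty -> *,
  and the automorphisms of * (elements of G; the identity of * is the unit of G).\<close>
datatype 'g sg_mor = SG_id_empty | SG_to_star | SG_aut 'g

definition sg_map :: "('a \<Rightarrow> 'b) \<Rightarrow> 'a sg_mor \<Rightarrow> 'b sg_mor" where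
  "sg_map \<phi> m = (case m of SG_id_empty \<Rightarrow> SG_id_empty | SG_to_star \<Rightarrow> SG_to_star
                   | SG_aut a \<Rightarrow> SG_aut (\<phi> a))"

definition pi_ob :: "('o,'m) cat \<Rightarrow> 'o \<Rightarrow> sg_obj" where
  "pi_ob C A = (if initial C A then SG_empty else SG_star)"

definition pi_mor :: "('o,'m) cat \<Rightarrow> 'o \<Rightarrow> ('o \<Rightarrow> 'm) \<Rightarrow> 'm \<Rightarrow> ('m \<times> 'm) set sg_mor" where
  "pi_mor C S F g =
     (if initial C (Dom C g) then (if initial C (Cod C g) then SG_id_empty else SG_to_star)
      else SG_aut (gclass C S (F (Dom C g), Cmp C (F (Cod C g)) g)))"

end

(*
  Condition (D) yields an Ore condition: two arrows with a common codomain and noninitial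
  domains always fit into a commutative square with noninitial apex, for otherwise the initial
  object would be their pullback and the two arrows would be disjoint. Under this condition the
  relation generating the equivalence on spans S <- A -> S is already transitive, and the product
  of two classes does not depend on the representatives or on the square used to compose them.

  Composition with the monomorphism f_U : U -> S sends spans over U to spans over S. It reflects
  the relation because f_U is mono, it is multiplicative, and it is onto on classes, since two Ore
  squares restrict any span over S to one whose legs factor through f_U. In C_U the spans over U,
  their relation and their product are literally those of C, and f_A = f_U f'_A turns pi_F' into
  pi_F.
*)

theory Submission
  imports Defs
begin

locale small_category =
  fixes C :: "('o, 'm) cat"
  assumes category: "category C"
begin

lemma comp_arr [simp]: "f \<in> Arr C \<Longrightarrow> g \<in> Arr C \<Longrightarrow> Cod C f = Dom C g \<Longrightarrow> Cmp C g f \<in> Arr C"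
  and comp_dom [simp]: "f \<in> Arr C \<Longrightarrow> g \<in> Arr C \<Longrightarrow> Cod C f = Dom C g \<Longrightarrow> Dom C (Cmp C g f) = Dom C f"
  and comp_cod [simp]: "f \<in> Arr C \<Longrightarrow> g \<in> Arr C \<Longrightarrow> Cod C f = Dom C g \<Longrightarrow> Cod C (Cmp C g f) = Cod C g"
  using category unfolding category_def by auto

lemma comp_assoc [simp]:
  "f \<in> Arr C \<Longrightarrow> g \<in> Arr C \<Longrightarrow> h \<in> Arr C \<Longrightarrow> Cod C f = Dom C g \<Longrightarrow> Cod C g = Dom C h \<Longrightarrow>
    Cmp C (Cmp C h g) f = Cmp C h (Cmp C g f)"
  using category unfolding category_def by metis

lemma id_arr [simp]: "A \<in> Obj C \<Longrightarrow> Id C A \<in> Arr C"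
  and id_dom [simp]: "A \<in> Obj C \<Longrightarrow> Dom C (Id C A) = A"
  and id_cod [simp]: "A \<in> Obj C \<Longrightarrow> Cod C (Id C A) = A"
  using category unfolding category_def homs_def by auto

lemma comp_id_right [simp]: "f \<in> Arr C \<Longrightarrow> Cmp C f (Id C (Dom C f)) = f"
  using category unfolding category_def by auto

lemma dom_obj [simp]: "f \<in> Arr C \<Longrightarrow> Dom C f \<in> Obj C"
  and cod_obj [simp]: "f \<in> Arr C \<Longrightarrow> Cod C f \<in> Obj C"
  using category unfolding category_def by auto

lemma comp_eq_extend:
  assumes "Cmp C a b = Cmp C c d" "a \<in> Arr C" "b \<in> Arr C" "c \<in> Arr C" "d \<in> Arr C" "x \<in> Arr C"
    "Cod C b = Dom C a" "Cod C d = Dom C c" "Cod C x = Dom C b" "Dom C b = Dom C d"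
  shows "Cmp C a (Cmp C b x) = Cmp C c (Cmp C d x)"
  using assms comp_assoc[of x b a] comp_assoc[of x d c] by simp

lemma comp_eq_paste:
  assumes sq1: "Cmp C f h = Cmp C g k" and sq2: "Cmp C g h' = Cmp C e k'"
    and sq3: "Cmp C k a = Cmp C h' b"
    and arr: "f \<in> Arr C" "g \<in> Arr C" "e \<in> Arr C" "h \<in> Arr C" "k \<in> Arr C" "h' \<in> Arr C"
      "k' \<in> Arr C" "a \<in> Arr C" "b \<in> Arr C"
    and dom_cod: "Cod C h = Dom C f" "Cod C k = Dom C g" "Cod C h' = Dom C g" "Cod C k' = Dom C e"
      "Dom C h = Dom C k" "Dom C h' = Dom C k'" "Cod C a = Dom C k" "Cod C b = Dom C h'"
  shows "Cmp C f (Cmp C h a) = Cmp C e (Cmp C k' b)"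
proof -
  have "Cmp C f (Cmp C h a) = Cmp C g (Cmp C k a)"
    using sq1 arr dom_cod by (intro comp_eq_extend) simp_all
  also have "\<dots> = Cmp C g (Cmp C h' b)" using sq3 by simp
  also have "\<dots> = Cmp C e (Cmp C k' b)"
    using sq2 arr dom_cod by (intro comp_eq_extend) simp_all
  finally show ?thesis .
qed

lemma initial_obj: "initial C E \<Longrightarrow> E \<in> Obj C"
  unfolding initial_def by simp

lemma initial_arrE:
  assumes "initial C E" "B \<in> Obj C"
  obtains f where "f \<in> homs C E B"
  using assms unfolding initial_def by blast

lemma initial_arr_unique:
  assumes "initial C E" "f \<in> homs C E B" "g \<in> homs C E B"
  shows "f = g"
  using assms cod_obj unfolding initial_def homs_def by blast

lemma initial_if_retract:
  assumes E: "initial C E" and e: "e \<in> homs C A E" and m: "m \<in> homs C E A"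
    and retract: "Cmp C m e = Id C A"
  shows "initial C A"
  unfolding initial_def
proof (intro conjI ballI)
  have e': "e \<in> Arr C" "Dom C e = A" "Cod C e = E" and m': "m \<in> Arr C" "Dom C m = E" "Cod C m = A"
    using e m unfolding homs_def by auto
  show A: "A \<in> Obj C" using e' dom_obj by blast
  fix B assume B: "B \<in> Obj C"
  obtain b where b: "b \<in> homs C E B" using initial_arrE[OF E B] .
  have "Cmp C b e \<in> homs C A B" using b e' unfolding homs_def by simp
  moreover have "f = g" if f: "f \<in> homs C A B" and g: "g \<in> homs C A B" for f g
  proof -
    have f': "f \<in> Arr C" "Dom C f = A" "Cod C f = B" and g': "g \<in> Arr C" "Dom C g = A" "Cod C g = B"
      using f g unfolding homs_def by auto
    have "Cmp C f m \<in> homs C E B" "Cmp C g m \<in> homs C E B"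
      using f' g' m' unfolding homs_def by simp_all
    then have "Cmp C f m = Cmp C g m" by (rule initial_arr_unique[OF E])
    then have "Cmp C f (Cmp C m e) = Cmp C g (Cmp C m e)"
      by (rule comp_eq_extend) (use f' g' m' e' in simp_all)
    then show "f = g" using f' g' unfolding retract by (metis comp_id_right)
  qed
  ultimately show "\<exists>!f. f \<in> homs C A B" by blast
qed

end

section \<open>The Ore condition\<close>

definition completes :: "('o, 'm) cat \<Rightarrow> 'm \<Rightarrow> 'm \<Rightarrow> 'm \<Rightarrow> 'm \<Rightarrow> bool" where
  "completes C a b u v \<longleftrightarrow> u \<in> Arr C \<and> v \<in> Arr C \<and> Dom C u = Dom C v \<and>
     \<not> initial C (Dom C u) \<and> Cod C u = Dom C a \<and> Cod C v = Dom C b \<and> Cmp C a u = Cmp C b v"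

lemma completesD:
  assumes "completes C a b u v"
  shows "u \<in> Arr C" "v \<in> Arr C" "Dom C u = Dom C v" "\<not> initial C (Dom C u)"
    "Cod C u = Dom C a" "Cod C v = Dom C b"
    and completes_comm: "Cmp C a u = Cmp C b v"
  using assms unfolding completes_def by auto

definition ore_condition :: "('o, 'm) cat \<Rightarrow> bool" where
  "ore_condition C \<longleftrightarrow> (\<forall>a\<in>Arr C. \<forall>b\<in>Arr C. Cod C a = Cod C b \<and>
     \<not> initial C (Dom C a) \<and> \<not> initial C (Dom C b) \<longrightarrow> (\<exists>u v. completes C a b u v))"

context small_category
begin

lemma initial_is_pullback:
  assumes E: "initial C E" and a: "a \<in> Arr C" and b: "b \<in> Arr C" and cod: "Cod C a = Cod C b"
    and no_square: "\<And>u v. \<not> completes C a b u v"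
    and pa: "pa \<in> homs C E (Dom C a)" and pb: "pb \<in> homs C E (Dom C b)"
  shows "is_pullback C a b E pa pb"
  unfolding is_pullback_def
proof (intro conjI ballI allI impI)
  show "E \<in> Obj C" using initial_obj[OF E] .
  show "Cmp C a pa = Cmp C b pb"
    using pa pb a b cod by (intro initial_arr_unique[OF E]) (auto simp: homs_def)
  fix X x1 x2
  assume x: "x1 \<in> homs C X (Dom C a) \<and> x2 \<in> homs C X (Dom C b) \<and> Cmp C a x1 = Cmp C b x2"
  have "initial C X"
    using no_square[of x1 x2] x unfolding completes_def homs_def by auto
  then obtain w where w: "w \<in> homs C X E" using initial_arrE initial_obj[OF E] by blast
  have "Cmp C pa w = x1" "Cmp C pb w = x2"
    using pa pb w x \<open>initial C X\<close> by (auto intro: initial_arr_unique simp: homs_def)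
  then show "\<exists>!w. w \<in> homs C X E \<and> Cmp C pa w = x1 \<and> Cmp C pb w = x2"
    using w \<open>initial C X\<close> initial_arr_unique by blast
qed (use pa pb in auto)

lemma ore_condition_if_cond_D:
  assumes E: "initial C E" and D: "cond_D C"
  shows "ore_condition C"
  unfolding ore_condition_def
proof (intro ballI impI)
  fix a b assume a: "a \<in> Arr C" and b: "b \<in> Arr C"
    and ab: "Cod C a = Cod C b \<and> \<not> initial C (Dom C a) \<and> \<not> initial C (Dom C b)"
  show "\<exists>u v. completes C a b u v"
  proof (rule ccontr)
    assume "\<nexists>u v. completes C a b u v"
    moreover obtain pa pb where "pa \<in> homs C E (Dom C a)" "pb \<in> homs C E (Dom C b)"
      using initial_arrE[OF E] a b by (meson dom_obj)
    ultimately have "disjoint_maps C a b"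
      using initial_is_pullback[OF E a b] a b ab E unfolding disjoint_maps_def by blast
    then show False using D a b ab unfolding cond_D_def by blast
  qed
qed

end

lemma gR_iff:
  "((f1, f2), (g1, g2)) \<in> gR C S \<longleftrightarrow> (f1, f2) \<in> gT C S \<and> (g1, g2) \<in> gT C S \<and>
     (\<exists>h k. completes C f1 g1 h k \<and> Cmp C f2 h = Cmp C g2 k)"
  unfolding gR_def completes_def by auto

lemma gT_D:
  assumes "(f1, f2) \<in> gT C S"
  shows "f1 \<in> Arr C" "f2 \<in> Arr C" "Dom C f1 = Dom C f2" "Cod C f1 = S" "Cod C f2 = S"
    "\<not> initial C (Dom C f1)"
  using assms unfolding gT_def by auto

lemma gR_subset: "gR C S \<subseteq> gT C S \<times> gT C S"
  unfolding gR_def by auto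

lemma gR_sym: "(p, q) \<in> gR C S \<Longrightarrow> (q, p) \<in> gR C S"
  unfolding gR_def by clarsimp metis

lemma gE_equiv: "equiv (gT C S) (gE C S)"
  unfolding gE_def equiv_def
proof (intro conjI)
  let ?R = "gR C S \<union> (gR C S)\<inverse>"
  show "refl_on (gT C S) (Restr (?R\<^sup>*) (gT C S))" by (rule refl_onI) auto
  show "sym (Restr (?R\<^sup>*) (gT C S))"
    by (intro sym_Int sym_rtrancl) (auto simp: sym_Un_converse sym_def)
  show "trans (Restr (?R\<^sup>*) (gT C S))"
    by (intro trans_Int trans_rtrancl) (auto simp: trans_def)
qed auto

lemma gclass_in_quotient: "p \<in> gT C S \<Longrightarrow> gclass C S p \<in> gT C S // gE C S"
  unfolding gclass_def by (rule quotientI)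

lemma gclass_self: "p \<in> gT C S \<Longrightarrow> p \<in> gclass C S p"
  unfolding gclass_def by (rule equiv_class_self[OF gE_equiv])

lemma gclass_subset: "gclass C S p \<subseteq> gT C S"
  unfolding gclass_def gE_def by auto

lemma quotient_gclassE:
  assumes "x \<in> gT C S // gE C S"
  obtains f1 f2 where "(f1, f2) \<in> gT C S" "x = gclass C S (f1, f2)"
  using assms unfolding gclass_def by (metis quotientE surj_pair)

(* gmult_def ties the codomain of u to the first leg f1 although the square sits over f2;
   the legs of a span have the same domain. *)
lemma gmult_eq_Eps:
  assumes "x \<subseteq> gT C S" "y \<subseteq> gT C S"
  shows "gmult C S x y = (SOME z. \<exists>f1 f2 g1 g2 u v. (f1, f2) \<in> x \<and> (g1, g2) \<in> y \<and>
    completes C f2 g1 u v \<and> z = gclass C S (Cmp C f1 u, Cmp C g2 v))"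
proof -
  have dom: "Dom C f1 = Dom C f2" if "(f1, f2) \<in> x" for f1 f2
    using assms that unfolding gT_def by auto
  show ?thesis
    unfolding gmult_def completes_def
    by (simp add: dom cong: conj_cong)
qed

context small_category
begin

lemma gR_refl: "p \<in> gT C S \<Longrightarrow> (p, p) \<in> gR C S"
  by (cases p) (force simp: gR_iff gT_def completes_def intro!: exI[of _ "Id C (Dom C (fst p))"])

lemma product_in_gT:
  assumes "(f1, f2) \<in> gT C S" "(g1, g2) \<in> gT C S" "completes C f2 g1 u v"
  shows "(Cmp C f1 u, Cmp C g2 v) \<in> gT C S"
  using gT_D[OF assms(1)] gT_D[OF assms(2)] completesD(1-6)[OF assms(3)] unfolding gT_def by simp

lemma gR_restrict:
  assumes p: "(f1, f2) \<in> gT C S" and h: "h \<in> Arr C" "Cod C h = Dom C f1" "\<not> initial C (Dom C h)"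
  shows "((Cmp C f1 h, Cmp C f2 h), (f1, f2)) \<in> gR C S"
proof -
  have "completes C (Cmp C f1 h) f1 (Id C (Dom C h)) h"
    and "Cmp C (Cmp C f2 h) (Id C (Dom C h)) = Cmp C f2 h"
    and "(Cmp C f1 h, Cmp C f2 h) \<in> gT C S"
    using p h unfolding gT_def completes_def by simp_all
  then show ?thesis
    using p unfolding gR_iff by blast
qed

end

locale ore_category = small_category +
  assumes ore: "ore_condition C"
begin

lemma oreE:
  assumes "a \<in> Arr C" "b \<in> Arr C" "Cod C a = Cod C b" "\<not> initial C (Dom C a)" "\<not> initial C (Dom C b)"
  obtains u v where "completes C a b u v"
  using ore assms unfolding ore_condition_def by blast

lemma gR_trans:
  assumes pq: "(p, q) \<in> gR C S" and qr: "(q, r) \<in> gR C S"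
  shows "(p, r) \<in> gR C S"
proof -
  obtain f1 f2 g1 g2 e1 e2 where pqr: "p = (f1, f2)" "q = (g1, g2)" "r = (e1, e2)"
    by (cases p, cases q, cases r) simp
  obtain h k where hk: "completes C f1 g1 h k" "Cmp C f2 h = Cmp C g2 k"
    and T: "(f1, f2) \<in> gT C S" "(g1, g2) \<in> gT C S"
    using pq unfolding pqr gR_iff by blast
  obtain h' k' where hk': "completes C g1 e1 h' k'" "Cmp C g2 h' = Cmp C e2 k'"
    and T': "(e1, e2) \<in> gT C S"
    using qr unfolding pqr gR_iff by blast
  note types = gT_D[OF T(1)] gT_D[OF T(2)] gT_D[OF T'] completesD(1-6)[OF hk(1)]
    completesD(1-6)[OF hk'(1)]
  obtain a b where ab: "completes C k h' a b"
    by (rule oreE[of k h']) (use types in auto)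
  note types = types completesD(1-6)[OF ab]
  have "Cmp C f1 (Cmp C h a) = Cmp C e1 (Cmp C k' b)"
    by (rule comp_eq_paste[OF completes_comm[OF hk(1)] completes_comm[OF hk'(1)]
          completes_comm[OF ab]]) (use types in simp_all)
  then have "completes C f1 e1 (Cmp C h a) (Cmp C k' b)"
    using types unfolding completes_def by simp
  moreover have "Cmp C f2 (Cmp C h a) = Cmp C e2 (Cmp C k' b)"
    by (rule comp_eq_paste[OF hk(2) hk'(2) completes_comm[OF ab]]) (use types in simp_all)
  ultimately show ?thesis
    unfolding pqr gR_iff using T T' by blast
qed

lemma gE_eq_gR: "gE C S = gR C S"
proof (rule equalityI)
  show "gE C S \<subseteq> gR C S"
  proof (rule subsetI)
    fix x assume x_in: "x \<in> gE C S"
    obtain p q where x: "x = (p, q)" by (cases x)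
    have pq: "(p, q) \<in> (gR C S \<union> (gR C S)\<inverse>)\<^sup>*" and p: "p \<in> gT C S"
      using x_in unfolding x gE_def by blast+
    from pq have "(p, q) \<in> gR C S"
    proof (induction rule: rtrancl_induct)
      case base
      show ?case using gR_refl[OF p] .
    next
      case (step q r)
      have "(q, r) \<in> gR C S"
        using step.hyps(2) by (auto dest: gR_sym)
      with step.IH show ?case by (rule gR_trans)
    qed
    then show "x \<in> gR C S" unfolding x .
  qed
  show "gR C S \<subseteq> gE C S"
  proof (rule subsetI)
    fix x assume x: "x \<in> gR C S"
    then have "x \<in> (gR C S \<union> (gR C S)\<inverse>)\<^sup>*" by (intro r_into_rtrancl) simp
    moreover have "x \<in> gT C S \<times> gT C S" using gR_subset x by (rule subsetD)
    ultimately show "x \<in> gE C S" unfolding gE_def by simp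
  qed
qed

lemma in_gclass_iff: "q \<in> gclass C S p \<longleftrightarrow> (p, q) \<in> gR C S"
  unfolding gclass_def gE_eq_gR by simp

lemma gclass_eq_iff:
  assumes "p \<in> gT C S" "q \<in> gT C S"
  shows "gclass C S p = gclass C S q \<longleftrightarrow> (p, q) \<in> gR C S"
  using eq_equiv_class_iff[OF gE_equiv assms] unfolding gclass_def gE_eq_gR .

lemma gclass_eq_if_gR:
  assumes "(p, q) \<in> gR C S"
  shows "gclass C S p = gclass C S q"
proof -
  have "p \<in> gT C S" "q \<in> gT C S" using subsetD[OF gR_subset assms] by simp_all
  with assms show ?thesis by (simp add: gclass_eq_iff)
qed

end

locale mono_ore_category = ore_category +
  assumes arrows_mono: "\<forall>f\<in>Arr C. mono C f"
begin

lemma mono_cancel: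
  assumes "Cmp C g a = Cmp C g b" "g \<in> Arr C" "a \<in> Arr C" "b \<in> Arr C"
    "Cod C a = Dom C g" "Cod C b = Dom C g" "Dom C a = Dom C b"
  shows "a = b"
  using arrows_mono assms unfolding mono_def by blast

lemma gR_product_choice:
  assumes p: "(f1, f2) \<in> gT C S" and q: "(g1, g2) \<in> gT C S"
    and uv: "completes C f2 g1 u v" and uv': "completes C f2 g1 u' v'"
  shows "((Cmp C f1 u, Cmp C g2 v), (Cmp C f1 u', Cmp C g2 v')) \<in> gR C S"
proof -
  note types = gT_D[OF p] gT_D[OF q] completesD(1-6)[OF uv] completesD(1-6)[OF uv']
  obtain a b where ab: "completes C u u' a b"
    by (rule oreE[of u u']) (use types in auto)
  note types = types completesD(1-6)[OF ab]
  have "Cmp C g1 (Cmp C v a) = Cmp C g1 (Cmp C v' b)"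
    by (rule comp_eq_paste[OF completes_comm[OF uv, symmetric] completes_comm[OF uv']
          completes_comm[OF ab]]) (use types in simp_all)
  then have "Cmp C v a = Cmp C v' b"
    by (rule mono_cancel) (use types in simp_all)
  then have "completes C (Cmp C f1 u) (Cmp C f1 u') a b"
    and "Cmp C (Cmp C g2 v) a = Cmp C (Cmp C g2 v') b"
    using types completes_comm[OF ab] unfolding completes_def by simp_all
  then show ?thesis
    using product_in_gT[OF p q uv] product_in_gT[OF p q uv'] unfolding gR_iff by blast
qed

(* Restrict both pairs of representatives to a common refinement, over which the two products
   are given by one and the same span. *)
lemma gR_product_congruence:
  assumes pp': "((f1, f2), (f1', f2')) \<in> gR C S" and qq': "((g1, g2), (g1', g2')) \<in> gR C S"
    and uv: "completes C f2 g1 u v" and uv': "completes C f2' g1' u' v'"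
  shows "((Cmp C f1 u, Cmp C g2 v), (Cmp C f1' u', Cmp C g2' v')) \<in> gR C S"
proof -
  obtain h h' where hh': "completes C f1 f1' h h'" "Cmp C f2 h = Cmp C f2' h'"
    and p: "(f1, f2) \<in> gT C S" and p': "(f1', f2') \<in> gT C S"
    using pp' unfolding gR_iff by blast
  obtain k k' where kk': "completes C g1 g1' k k'" "Cmp C g2 k = Cmp C g2' k'"
    and q: "(g1, g2) \<in> gT C S" and q': "(g1', g2') \<in> gT C S"
    using qq' unfolding gR_iff by blast
  note types = gT_D[OF p] gT_D[OF p'] gT_D[OF q] gT_D[OF q'] completesD(1-6)[OF hh'(1)]
    completesD(1-6)[OF kk'(1)]
  obtain a b where ab: "completes C (Cmp C f2 h) (Cmp C g1 k) a b"
    by (rule oreE[of "Cmp C f2 h" "Cmp C g1 k"]) (use types in auto)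
  note types = types completesD(1-6)[OF ab]
  have "Cmp C f2 (Cmp C h a) = Cmp C (Cmp C f2 h) a" using types by simp
  also have "\<dots> = Cmp C (Cmp C g1 k) b" using completes_comm[OF ab] .
  also have "\<dots> = Cmp C g1 (Cmp C k b)" using types by simp
  finally have sq: "completes C f2 g1 (Cmp C h a) (Cmp C k b)"
    using types unfolding completes_def by auto
  have "Cmp C f2' (Cmp C h' a) = Cmp C (Cmp C f2 h) a" using types hh'(2) by simp
  also have "\<dots> = Cmp C (Cmp C g1 k) b" using completes_comm[OF ab] .
  also have "\<dots> = Cmp C g1' (Cmp C k' b)" using types completes_comm[OF kk'(1)] by simp
  finally have sq': "completes C f2' g1' (Cmp C h' a) (Cmp C k' b)"
    using types unfolding completes_def by auto
  have "Cmp C f1 (Cmp C h a) = Cmp C f1' (Cmp C h' a)"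
    and "Cmp C g2 (Cmp C k b) = Cmp C g2' (Cmp C k' b)"
    using types completes_comm[OF hh'(1)] kk'(2) by (auto intro: comp_eq_extend)
  then show ?thesis
    using gR_product_choice[OF p q uv sq] gR_product_choice[OF p' q' sq' uv']
    by (metis gR_trans gR_sym)
qed

lemma gmult_gclass:
  assumes p: "(f1, f2) \<in> gT C S" and q: "(g1, g2) \<in> gT C S" and uv: "completes C f2 g1 u v"
  shows "gmult C S (gclass C S (f1, f2)) (gclass C S (g1, g2)) = gclass C S (Cmp C f1 u, Cmp C g2 v)"
  unfolding gmult_eq_Eps[OF gclass_subset gclass_subset]
proof (rule some_equality)
  show "\<exists>f1' f2' g1' g2' u' v'. (f1', f2') \<in> gclass C S (f1, f2) \<and> (g1', g2') \<in> gclass C S (g1, g2) \<and>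
      completes C f2' g1' u' v' \<and>
      gclass C S (Cmp C f1 u, Cmp C g2 v) = gclass C S (Cmp C f1' u', Cmp C g2' v')"
    using gclass_self[OF p] gclass_self[OF q] uv by blast
next
  fix z
  assume "\<exists>f1' f2' g1' g2' u' v'. (f1', f2') \<in> gclass C S (f1, f2) \<and> (g1', g2') \<in> gclass C S (g1, g2) \<and>
      completes C f2' g1' u' v' \<and> z = gclass C S (Cmp C f1' u', Cmp C g2' v')"
  then obtain f1' f2' g1' g2' u' v' where
    rel: "((f1, f2), (f1', f2')) \<in> gR C S" "((g1, g2), (g1', g2')) \<in> gR C S"
    and uv': "completes C f2' g1' u' v'" and z: "z = gclass C S (Cmp C f1' u', Cmp C g2' v')"
    unfolding in_gclass_iff by blast
  have "((Cmp C f1 u, Cmp C g2 v), (Cmp C f1' u', Cmp C g2' v')) \<in> gR C S"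
    using gR_product_congruence[OF rel uv uv'] .
  then show "z = gclass C S (Cmp C f1 u, Cmp C g2 v)"
    unfolding z by (rule gclass_eq_if_gR[symmetric])
qed

end

section \<open>The full subcategory over U\<close>

lemma Obj_full_sub: "A \<in> Obj (full_sub C U) \<longleftrightarrow> A \<in> Obj C \<and> homs C A U \<noteq> {}"
  by (simp add: full_sub_def)

lemma Arr_full_sub:
  "f \<in> Arr (full_sub C U) \<longleftrightarrow> f \<in> Arr C \<and> homs C (Dom C f) U \<noteq> {} \<and> homs C (Cod C f) U \<noteq> {}"
  by (simp add: full_sub_def)

lemma full_sub_simps [simp]:
  "Dom (full_sub C U) = Dom C" "Cod (full_sub C U) = Cod C"
  "Cmp (full_sub C U) = Cmp C" "Id (full_sub C U) = Id C"
  by (simp_all add: full_sub_def)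

lemma iso_cong_source:
  assumes "carrier G' = carrier G"
    and "\<And>x y. x \<in> carrier G \<Longrightarrow> y \<in> carrier G \<Longrightarrow> x \<otimes>\<^bsub>G'\<^esub> y = x \<otimes>\<^bsub>G\<^esub> y"
  shows "iso G' H = iso G H"
  using assms unfolding iso_def hom_def by auto

context small_category
begin

lemma arr_into_full_sub:
  assumes f: "f \<in> Arr C" and cod: "Cod C f \<in> Obj (full_sub C U)"
  shows "f \<in> Arr (full_sub C U)" "Dom C f \<in> Obj (full_sub C U)"
proof -
  obtain g where "g \<in> homs C (Cod C f) U" using cod unfolding Obj_full_sub by blast
  then have "Cmp C g f \<in> homs C (Dom C f) U" using f unfolding homs_def by simp
  then show "f \<in> Arr (full_sub C U)" "Dom C f \<in> Obj (full_sub C U)"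
    using f cod unfolding Arr_full_sub Obj_full_sub by auto
qed

lemma homs_full_sub:
  "A \<in> Obj (full_sub C U) \<Longrightarrow> B \<in> Obj (full_sub C U) \<Longrightarrow> homs (full_sub C U) A B = homs C A B"
  unfolding homs_def Arr_full_sub Obj_full_sub by auto

lemma initial_full_sub_iff:
  assumes E: "initial C E" and U: "U \<in> Obj C" and A: "A \<in> Obj (full_sub C U)"
  shows "initial (full_sub C U) A \<longleftrightarrow> initial C A"
proof
  assume A_init: "initial C A"
  show "initial (full_sub C U) A"
    unfolding initial_def
  proof (intro conjI ballI)
    fix B assume B: "B \<in> Obj (full_sub C U)"
    then have "B \<in> Obj C" by (simp add: Obj_full_sub)
    then show "\<exists>!f. f \<in> homs (full_sub C U) A B"
      using A_init homs_full_sub[OF A B] unfolding initial_def by simp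
  qed (fact A)
next
  assume A_init: "initial (full_sub C U) A"
  have "E \<in> Obj (full_sub C U)"
    using initial_arrE[OF E U] initial_obj[OF E] unfolding Obj_full_sub by blast
  then obtain e where e: "e \<in> homs C A E"
    using A_init homs_full_sub[OF A] unfolding initial_def by blast
  obtain m where m: "m \<in> homs C E A"
    using initial_arrE[OF E] A unfolding Obj_full_sub by blast
  have "A \<in> Obj C" using A by (simp add: Obj_full_sub)
  then have "Cmp C m e \<in> homs (full_sub C U) A A" "Id C A \<in> homs (full_sub C U) A A"
    unfolding homs_full_sub[OF A A] using e m unfolding homs_def by simp_all
  then have "Cmp C m e = Id C A"
    using A_init A unfolding initial_def by blast
  then show "initial C A" by (rule initial_if_retract[OF E e m])
qed

lemma arr_full_sub_iff:
  assumes "Cod C f \<in> Obj (full_sub C U)"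
  shows "f \<in> Arr (full_sub C U) \<longleftrightarrow> f \<in> Arr C"
  using arr_into_full_sub(1)[OF _ assms] by (auto simp: Arr_full_sub)

lemma completes_full_sub:
  assumes E: "initial C E" and U: "U \<in> Obj C"
    and a: "Dom C a \<in> Obj (full_sub C U)" and b: "Dom C b \<in> Obj (full_sub C U)"
  shows "completes (full_sub C U) a b u v \<longleftrightarrow> completes C a b u v"
  using a b arr_full_sub_iff[of u U] arr_full_sub_iff[of v U] arr_into_full_sub(2)[of u U]
    initial_full_sub_iff[OF E U, of "Dom C u"]
  unfolding completes_def by auto

lemma U_in_full_sub: "U \<in> Obj C \<Longrightarrow> U \<in> Obj (full_sub C U)"
  unfolding Obj_full_sub homs_def by (auto intro: exI[of _ "Id C U"])

lemma gT_dom_full_sub: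
  assumes U: "U \<in> Obj C" and p: "(f1, f2) \<in> gT C U"
  shows "Dom C f1 \<in> Obj (full_sub C U)" "Dom C f2 \<in> Obj (full_sub C U)"
  using gT_D[OF p] arr_into_full_sub(2)[of f1 U] arr_into_full_sub(2)[of f2 U] U_in_full_sub[OF U]
  by simp_all

lemma gT_full_sub:
  assumes E: "initial C E" and U: "U \<in> Obj C"
  shows "gT (full_sub C U) U = gT C U"
  using arr_full_sub_iff[of _ U] arr_into_full_sub(2)[of _ U] initial_full_sub_iff[OF E U]
    U_in_full_sub[OF U]
  unfolding gT_def by auto

lemma gR_full_sub:
  assumes E: "initial C E" and U: "U \<in> Obj C"
  shows "gR (full_sub C U) U = gR C U"
proof -
  have "completes (full_sub C U) f1 g1 h k \<longleftrightarrow> completes C f1 g1 h k"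
    if "(f1, f2) \<in> gT C U" "(g1, g2) \<in> gT C U" for f1 f2 g1 g2 h k
    using gT_dom_full_sub(1)[OF U that(1)] gT_dom_full_sub(1)[OF U that(2)]
    by (rule completes_full_sub[OF E U])
  then have "((f1, f2), (g1, g2)) \<in> gR (full_sub C U) U \<longleftrightarrow> ((f1, f2), (g1, g2)) \<in> gR C U"
    for f1 f2 g1 g2
    unfolding gR_iff gT_full_sub[OF E U] by (simp cong: conj_cong)
  then show ?thesis
    unfolding set_eq_iff by (simp add: split_paired_All)
qed

lemma gclass_full_sub:
  assumes E: "initial C E" and U: "U \<in> Obj C"
  shows "gclass (full_sub C U) U = gclass C U"
  unfolding gclass_def gE_def gT_full_sub[OF E U] gR_full_sub[OF E U] ..

lemma gmult_full_sub:
  assumes E: "initial C E" and U: "U \<in> Obj C" and x: "x \<subseteq> gT C U" and y: "y \<subseteq> gT C U"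
  shows "gmult (full_sub C U) U x y = gmult C U x y"
proof -
  have completes_eq: "completes (full_sub C U) f2 g1 u v \<longleftrightarrow> completes C f2 g1 u v"
    if "(f1, f2) \<in> x" "(g1, g2) \<in> y" for f1 f2 g1 g2 u v
    using gT_dom_full_sub(2)[OF U subsetD[OF x that(1)]] gT_dom_full_sub(1)[OF U subsetD[OF y that(2)]]
    by (rule completes_full_sub[OF E U])
  have "gmult (full_sub C U) U x y = (SOME z. \<exists>f1 f2 g1 g2 u v. (f1, f2) \<in> x \<and> (g1, g2) \<in> y \<and>
      completes (full_sub C U) f2 g1 u v \<and> z = gclass (full_sub C U) U (Cmp C f1 u, Cmp C g2 v))"
    using gmult_eq_Eps[of x "full_sub C U" U y] x y by (simp add: gT_full_sub[OF E U])
  also have "\<dots> = (SOME z. \<exists>f1 f2 g1 g2 u v. (f1, f2) \<in> x \<and> (g1, g2) \<in> y \<and>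
      completes C f2 g1 u v \<and> z = gclass C U (Cmp C f1 u, Cmp C g2 v))"
    using completes_eq unfolding gclass_full_sub[OF E U] by (simp cong: conj_cong)
  also have "\<dots> = gmult C U x y"
    using gmult_eq_Eps[OF x y] ..
  finally show ?thesis .
qed

lemma iso_group_of_full_sub:
  assumes E: "initial C E" and U: "U \<in> Obj C"
  shows "iso (group_of (full_sub C U) U) G = iso (group_of C U) G"
proof (rule iso_cong_source)
  show "carrier (group_of (full_sub C U) U) = carrier (group_of C U)"
    unfolding group_of_def gE_def gT_full_sub[OF E U] gR_full_sub[OF E U] by simp
  fix x y assume "x \<in> carrier (group_of C U)" "y \<in> carrier (group_of C U)"
  then show "x \<otimes>\<^bsub>group_of (full_sub C U) U\<^esub> y = x \<otimes>\<^bsub>group_of C U\<^esub> y"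
    unfolding group_of_def using gmult_full_sub[OF E U] in_quotient_imp_subset[OF gE_equiv[of C U]]
    by simp
qed

end

section \<open>Pushforward of spans along a monomorphism\<close>

definition push_span :: "('o, 'm) cat \<Rightarrow> 'm \<Rightarrow> 'm \<times> 'm \<Rightarrow> 'm \<times> 'm" where
  "push_span C t = (\<lambda>(a, b). (Cmp C t a, Cmp C t b))"

(* Saturating the image makes push_class well defined without choosing representatives. *)
definition push_class :: "('o, 'm) cat \<Rightarrow> 'o \<Rightarrow> 'm \<Rightarrow> ('m \<times> 'm) set \<Rightarrow> ('m \<times> 'm) set" where
  "push_class C S t x = gE C S `` (push_span C t ` x)"

locale span_pushforward = mono_ore_category +
  fixes U S t
  assumes t: "t \<in> homs C U S" and U_noninitial: "\<not> initial C U"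
begin

lemma t_arr: "t \<in> Arr C" and t_dom: "Dom C t = U" and t_cod: "Cod C t = S"
  using t unfolding homs_def by auto

lemma comp_t_cancel_iff:
  assumes "a \<in> Arr C" "c \<in> Arr C" "h \<in> Arr C" "k \<in> Arr C" "Cod C a = U" "Cod C c = U"
    "Cod C h = Dom C a" "Cod C k = Dom C c" "Dom C h = Dom C k"
  shows "Cmp C (Cmp C t a) h = Cmp C (Cmp C t c) k \<longleftrightarrow> Cmp C a h = Cmp C c k"
proof
  assume "Cmp C (Cmp C t a) h = Cmp C (Cmp C t c) k"
  then have "Cmp C t (Cmp C a h) = Cmp C t (Cmp C c k)"
    using assms t_arr t_dom by simp
  then show "Cmp C a h = Cmp C c k"
    by (rule mono_cancel) (use assms t_arr t_dom in simp_all)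
qed (use assms t_arr t_dom in simp)

lemma push_span_gT: "p \<in> gT C U \<Longrightarrow> push_span C t p \<in> gT C S"
  using t_arr t_dom t_cod unfolding push_span_def gT_def by auto

lemma push_span_gR_iff:
  assumes p: "p \<in> gT C U" and q: "q \<in> gT C U"
  shows "(push_span C t p, push_span C t q) \<in> gR C S \<longleftrightarrow> (p, q) \<in> gR C U"
proof -
  obtain a b c d where pq: "p = (a, b)" "q = (c, d)" by fastforce
  note types = gT_D[OF p[unfolded pq]] gT_D[OF q[unfolded pq]] t_arr t_dom
  have "completes C (Cmp C t a) (Cmp C t c) h k \<and> Cmp C (Cmp C t b) h = Cmp C (Cmp C t d) k \<longleftrightarrow>
      completes C a c h k \<and> Cmp C b h = Cmp C d k" for h k
    using comp_t_cancel_iff[of a c h k] comp_t_cancel_iff[of b d h k] types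
    unfolding completes_def by auto
  moreover have "(Cmp C t a, Cmp C t b) \<in> gT C S" "(Cmp C t c, Cmp C t d) \<in> gT C S"
    using push_span_gT p q unfolding pq push_span_def by auto
  ultimately show ?thesis
    using p q unfolding pq push_span_def prod.case gR_iff by simp
qed

lemma push_class_gclass:
  assumes p: "p \<in> gT C U"
  shows "push_class C S t (gclass C U p) = gclass C S (push_span C t p)"
proof -
  have push_rel: "(push_span C t p, push_span C t q) \<in> gE C S" if "q \<in> gclass C U p" for q
  proof -
    have "(p, q) \<in> gR C U" using that unfolding in_gclass_iff .
    moreover have "q \<in> gT C U" using subsetD[OF gR_subset calculation] by simp
    ultimately show ?thesis using push_span_gR_iff[OF p] unfolding gE_eq_gR by simp
  qed
  have trans: "trans (gE C S)" using gE_equiv[of C S] unfolding equiv_def by blast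
  show ?thesis
  proof (rule equalityI)
    show "push_class C S t (gclass C U p) \<subseteq> gclass C S (push_span C t p)"
      unfolding push_class_def gclass_def using push_rel[unfolded gclass_def]
      by (blast intro: transD[OF trans])
    show "gclass C S (push_span C t p) \<subseteq> push_class C S t (gclass C U p)"
      unfolding push_class_def gclass_def using gclass_self[OF p, unfolded gclass_def] by blast
  qed
qed

lemma push_class_in_quotient:
  assumes "x \<in> gT C U // gE C U"
  shows "push_class C S t x \<in> gT C S // gE C S"
  using assms push_class_gclass push_span_gT gclass_in_quotient by (metis quotient_gclassE)

lemma push_class_gmult:
  assumes x: "x \<in> gT C U // gE C U" and y: "y \<in> gT C U // gE C U"
  shows "push_class C S t (gmult C U x y) = gmult C S (push_class C S t x) (push_class C S t y)"
proof -
  obtain f1 f2 where p: "(f1, f2) \<in> gT C U" and x: "x = gclass C U (f1, f2)"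
    using x by (rule quotient_gclassE)
  obtain g1 g2 where q: "(g1, g2) \<in> gT C U" and y: "y = gclass C U (g1, g2)"
    using y by (rule quotient_gclassE)
  note types = gT_D[OF p] gT_D[OF q] t_arr t_dom t_cod
  obtain u v where uv: "completes C f2 g1 u v"
    by (rule oreE[of f2 g1]) (use types in simp_all)
  have tp: "(Cmp C t f1, Cmp C t f2) \<in> gT C S" and tq: "(Cmp C t g1, Cmp C t g2) \<in> gT C S"
    using push_span_gT p q unfolding push_span_def by auto
  have tuv: "completes C (Cmp C t f2) (Cmp C t g1) u v"
    using uv types unfolding completes_def by auto
  have "push_class C S t (gmult C U x y) = push_class C S t (gclass C U (Cmp C f1 u, Cmp C g2 v))"
    unfolding x y gmult_gclass[OF p q uv] ..
  also have "\<dots> = gclass C S (Cmp C t (Cmp C f1 u), Cmp C t (Cmp C g2 v))"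
    using push_class_gclass[OF product_in_gT[OF p q uv]] unfolding push_span_def by simp
  also have "\<dots> = gclass C S (Cmp C (Cmp C t f1) u, Cmp C (Cmp C t g2) v)"
    using types completesD[OF uv] by simp
  also have "\<dots> = gmult C S (push_class C S t x) (push_class C S t y)"
    using gmult_gclass[OF tp tq tuv] push_class_gclass[OF p] push_class_gclass[OF q]
    unfolding x y push_span_def by simp
  finally show ?thesis .
qed

lemma push_class_inj_on: "inj_on (push_class C S t) (gT C U // gE C U)"
proof (rule inj_onI)
  fix x y
  assume "x \<in> gT C U // gE C U" "y \<in> gT C U // gE C U" and eq: "push_class C S t x = push_class C S t y"
  then obtain p q where p: "p \<in> gT C U" "x = gclass C U p" and q: "q \<in> gT C U" "y = gclass C U q"
    by (metis quotient_gclassE)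
  have "(push_span C t p, push_span C t q) \<in> gR C S"
    using eq push_span_gT p q unfolding p(2) q(2) push_class_gclass[OF p(1)] push_class_gclass[OF q(1)]
    by (simp add: gclass_eq_iff)
  then show "x = y"
    unfolding p(2) q(2) using push_span_gR_iff[OF p(1) q(1)] gclass_eq_if_gR by blast
qed

(* Lift first e1 and then e2 through t by Ore squares; the span obtained over S is a restriction
   of (e1, e2). *)
lemma push_class_surj:
  assumes e: "(e1, e2) \<in> gT C S"
  shows "\<exists>p\<in>gT C U. gclass C S (push_span C t p) = gclass C S (e1, e2)"
proof -
  note types = gT_D[OF e] t_arr t_dom t_cod
  obtain a q where aq: "completes C e1 t a q"
    by (rule oreE[of e1 t]) (use types U_noninitial in simp_all)
  note types = types completesD(1-6)[OF aq]
  obtain r s where rs: "completes C (Cmp C e2 a) t r s"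
    by (rule oreE[of "Cmp C e2 a" t]) (use types U_noninitial in simp_all)
  note types = types completesD(1-6)[OF rs]
  have r_cod: "Cod C r = Dom C a" using types by simp
  have span: "(Cmp C q r, s) \<in> gT C U"
    using types r_cod unfolding gT_def by simp
  have "Cmp C t (Cmp C q r) = Cmp C e1 (Cmp C a r)"
    using completes_comm[OF aq, symmetric] types r_cod by (intro comp_eq_extend) simp_all
  moreover have "Cmp C t s = Cmp C e2 (Cmp C a r)"
    using completes_comm[OF rs, symmetric] types r_cod by simp
  moreover have "((Cmp C e1 (Cmp C a r), Cmp C e2 (Cmp C a r)), (e1, e2)) \<in> gR C S"
    using types r_cod by (intro gR_restrict[OF e]) simp_all
  ultimately have "gclass C S (push_span C t (Cmp C q r, s)) = gclass C S (e1, e2)"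
    unfolding push_span_def by (simp add: gclass_eq_if_gR)
  with span show ?thesis by blast
qed

lemma push_class_image: "push_class C S t ` (gT C U // gE C U) = gT C S // gE C S"
proof
  show "push_class C S t ` (gT C U // gE C U) \<subseteq> gT C S // gE C S"
    by (rule image_subsetI) (rule push_class_in_quotient)
  show "gT C S // gE C S \<subseteq> push_class C S t ` (gT C U // gE C U)"
  proof
    fix w assume "w \<in> gT C S // gE C S"
    then obtain e1 e2 where e: "(e1, e2) \<in> gT C S" and w: "w = gclass C S (e1, e2)"
      by (rule quotient_gclassE)
    obtain p where p: "p \<in> gT C U" "gclass C S (push_span C t p) = gclass C S (e1, e2)"
      using push_class_surj[OF e] by blast
    have "w = push_class C S t (gclass C U p)"
      unfolding w push_class_gclass[OF p(1)] p(2) ..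
    then show "w \<in> push_class C S t ` (gT C U // gE C U)"
      by (rule image_eqI) (rule gclass_in_quotient[OF p(1)])
  qed
qed

lemma push_class_iso: "push_class C S t \<in> iso (group_of C U) (group_of C S)"
proof -
  have "push_class C S t \<in> hom (group_of C U) (group_of C S)"
    unfolding hom_def group_of_def using push_class_in_quotient push_class_gmult by simp
  moreover have "bij_betw (push_class C S t) (carrier (group_of C U)) (carrier (group_of C S))"
    unfolding bij_betw_def group_of_def using push_class_inj_on push_class_image by simp
  ultimately show ?thesis unfolding iso_def by blast
qed

lemma pi_mor_full_sub:
  assumes E: "initial C E"
    and F': "\<forall>A\<in>Obj (full_sub C U). F' A \<in> homs (full_sub C U) A U"
    and compat: "\<forall>A\<in>Obj (full_sub C U). F A = Cmp C t (F' A)"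
    and g: "g \<in> Arr (full_sub C U)"
  shows "pi_mor C S F g = sg_map (push_class C S t) (pi_mor (full_sub C U) U F' g)"
proof -
  have U: "U \<in> Obj C" using t_arr t_dom dom_obj by blast
  have gC: "g \<in> Arr C" using g unfolding Arr_full_sub by simp
  have A: "Dom C g \<in> Obj (full_sub C U)" and B: "Cod C g \<in> Obj (full_sub C U)"
    using g unfolding Arr_full_sub Obj_full_sub by auto
  note initial_iff = initial_full_sub_iff[OF E U A] initial_full_sub_iff[OF E U B]
  show ?thesis
  proof (cases "initial C (Dom C g)")
    case True
    then show ?thesis unfolding pi_mor_def sg_map_def using initial_iff by simp
  next
    case False
    have FA: "F' (Dom C g) \<in> homs C (Dom C g) U" and FB: "F' (Cod C g) \<in> homs C (Cod C g) U"
      using F' A B homs_full_sub[OF A] homs_full_sub[OF B] U_in_full_sub[OF U] by auto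
    then have span: "(F' (Dom C g), Cmp C (F' (Cod C g)) g) \<in> gT C U"
      using gC False unfolding gT_def homs_def by simp
    have "Cmp C (F (Cod C g)) g = Cmp C t (Cmp C (F' (Cod C g)) g)"
      using compat B FB gC t_arr t_dom unfolding homs_def by simp
    then show ?thesis
      using False initial_iff compat A push_class_gclass[OF span]
      unfolding pi_mor_def sg_map_def push_span_def gclass_full_sub[OF E U] by simp
  qed
qed

end

theorem proposition3p9:
  fixes C :: "('o, 'm) cat" and Cov :: "'o \<Rightarrow> 'm set set"
    and S U :: 'o and F F' :: "'o \<Rightarrow> 'm"
  assumes asm: "assembler C Cov"
    and sink: "is_sink C S"
    and Ep: "cond_Ep C Cov"
    and D: "cond_D C"
    and U: "U \<in> Obj C" "\<not> initial C U"
    and F: "\<forall>A\<in>Obj C. F A \<in> homs C A S" "F S = Id C S"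
    and F': "\<forall>A\<in>Obj (full_sub C U). F' A \<in> homs (full_sub C U) A U" "F' U = Id C U"
    and compat: "\<forall>A\<in>Obj (full_sub C U). F A = Cmp C (F U) (F' A)"
  shows "\<exists>\<phi>. \<phi> \<in> iso (group_of (full_sub C U) U) (group_of C S) \<and>
           (\<forall>A\<in>Obj (full_sub C U). pi_ob C A = pi_ob (full_sub C U) A) \<and>
           (\<forall>g\<in>Arr (full_sub C U). pi_mor C S F g = sg_map \<phi> (pi_mor (full_sub C U) U F' g))"
proof -
  interpret small_category C
    using asm unfolding assembler_def small_category_def by blast
  obtain E where E: "initial C E"
    using asm unfolding assembler_def by blast
  interpret span_pushforward C U S "F U"
  proof
    show "ore_condition C" using ore_condition_if_cond_D[OF E D] .
    show "\<forall>f\<in>Arr C. mono C f" using asm unfolding assembler_def by blast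
  qed (use F(1) U in auto)
  have "push_class C S (F U) \<in> iso (group_of (full_sub C U) U) (group_of C S)"
    using push_class_iso unfolding iso_group_of_full_sub[OF E U(1)] .
  moreover have "\<forall>A\<in>Obj (full_sub C U). pi_ob C A = pi_ob (full_sub C U) A"
    unfolding pi_ob_def using initial_full_sub_iff[OF E U(1)] by simp
  moreover have "\<forall>g\<in>Arr (full_sub C U).
      pi_mor C S F g = sg_map (push_class C S (F U)) (pi_mor (full_sub C U) U F' g)"
    using pi_mor_full_sub[OF E F'(1) compat] by blast
  ultimately show ?thesis by blast
qed

end
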